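(* There exists a natural number $n_0$ such that for every natural number $n\ge n_0$ there exists a real symmetric $n\times n$ matrix $T$ with $\|T\|_1=1$ and $$\forall R,C\in M_n(\mathbb{C}):\quad|\mathrm{tr}((R\circ C)T)|\le3\|R\|_r\|C\|_c\,n^{-1/2}.$$
   Context: $\|T\|_1$ is the trace norm (first Schatten norm, the sum of the singular values). $R\circ C$ is the entrywise Schur product $(r_{ij}c_{ij})$. $\|R\|_r:=\max_i(\sum_j|r_{ij}|^2)^{1/2}$ and $\|C\|_c:=\max_j(\sum_i|c_{ij}|^2)^{1/2}$. *)

theory Defs
  imports Complex_Main "Jordan_Normal_Form.Char_Poly"
begin

text \<open>Singular values of a real matrix A are the square roots of the eigenvalues of
  A^T A (counted with algebraic multiplicity, i.e. root multiplicity in the characteristic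
  polynomial).\<close>
definition trace_norm :: "real mat \<Rightarrow> real" where
  "trace_norm A =
     (let p = char_poly (transpose_mat A * A)
      in \<Sum>a\<in>{a. poly p a = 0}. real (order a p) * sqrt a)"

definition schur_prod :: "complex mat \<Rightarrow> complex mat \<Rightarrow> complex mat" where
  "schur_prod R C = mat (dim_row R) (dim_col R) (\<lambda>(i,j). R $$ (i,j) * C $$ (i,j))"

definition mat_trace :: "complex mat \<Rightarrow> complex" where
  "mat_trace A = (\<Sum>i<dim_row A. A $$ (i,i))"

definition row_norm :: "complex mat \<Rightarrow> real" where
  "row_norm R = Max ((\<lambda>i. sqrt (\<Sum>j<dim_col R. (cmod (R $$ (i,j)))\<^sup>2)) ` {..<dim_row R})"

definition col_norm :: "complex mat \<Rightarrow> real" where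
  "col_norm C = Max ((\<lambda>j. sqrt (\<Sum>i<dim_row C. (cmod (C $$ (i,j)))\<^sup>2)) ` {..<dim_col C})"

end

theory Submission
  imports Defs "HOL-Analysis.L2_Norm"
begin

(* The witness is the normalized discrete Hartley matrix T = n^(-3/2) H with
   H_jk = cas (2 pi j k / n), where cas = cos + sin.  Orthogonality of the n-th roots of
   unity gives H^2 = n I, so T^T T = n^(-2) I: all n singular values of T equal 1/n and its
   trace norm is 1.  On the other hand every entry of T is at most 2 n^(-3/2) in absolute
   value, so |tr((R o C) T)| <= 2 n^(-3/2) sum |r_ik| |c_ik|, and by Cauchy-Schwarz this sum
   is at most the product of the Frobenius norms of R and C, which are at most
   sqrt n * ||R||_r and sqrt n * ||C||_c. *)

lemma cis_eq_1_iff_dvd: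
  assumes "n > 0"
  shows "cis (2 * pi * of_int d / real n) = 1 \<longleftrightarrow> int n dvd d"
proof
  assume "cis (2 * pi * of_int d / real n) = 1"
  then have "cos (2 * pi * of_int d / real n) = 1"
    by (metis cis.sel(1) one_complex.sel(1))
  then obtain m :: int where "2 * pi * of_int d / real n = of_int m * 2 * pi"
    using cos_one_2pi_int by blast
  then have "real_of_int d = real_of_int (m * int n)"
    using assms by (simp add: field_simps)
  then show "int n dvd d"
    by (metis dvd_triv_right of_int_eq_iff)
next
  assume "int n dvd d"
  then obtain m where "d = int n * m" ..
  then have "2 * pi * of_int d / real n = 2 * pi * of_int m"
    using assms by simp
  then show "cis (2 * pi * of_int d / real n) = 1"
    by simp
qed

lemma sum_cis_multiples:
  assumes "n > 0"
  shows "(\<Sum>k<n. cis (2 * pi * real k * of_int d / real n)) = (if int n dvd d then of_nat n else 0)"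
proof -
  define w where "w = cis (2 * pi * of_int d / real n)"
  have powers: "cis (2 * pi * real k * of_int d / real n) = w ^ k" for k
    unfolding w_def DeMoivre by (simp add: mult_ac)
  have "w ^ n = 1"
    using assms unfolding w_def DeMoivre by (simp add: cis_multiple_2pi)
  then show ?thesis
    using cis_eq_1_iff_dvd[OF assms, of d] unfolding powers w_def[symmetric]
    by (simp add: sum_gp_strict)
qed

lemma sum_cos_multiples:
  assumes "n > 0"
  shows "(\<Sum>k<n. cos (2 * pi * real k * of_int d / real n)) = (if int n dvd d then real n else 0)"
  using arg_cong[OF sum_cis_multiples[OF assms, of d], of Re] by (simp add: Re_sum)

lemma sum_sin_multiples:
  assumes "n > 0"
  shows "(\<Sum>k<n. sin (2 * pi * real k * of_int d / real n)) = 0"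
  using arg_cong[OF sum_cis_multiples[OF assms, of d], of Im] by (simp add: Im_sum)

definition cas :: "real \<Rightarrow> real" where
  "cas x = cos x + sin x"

lemma cas_mult_cas: "cas x * cas y = cos (x - y) + sin (x + y)"
  unfolding cas_def cos_diff sin_add by (simp add: algebra_simps)

lemma abs_cas_le: "\<bar>cas x\<bar> \<le> 2"
  unfolding cas_def using abs_cos_le_one[of x] abs_sin_le_one[of x] by linarith

definition hartley_mat :: "nat \<Rightarrow> real mat" where
  "hartley_mat n = mat n n (\<lambda>(j, k). cas (2 * pi * real j * real k / real n))"

lemma hartley_mat_carrier: "hartley_mat n \<in> carrier_mat n n"
  unfolding hartley_mat_def by simp

lemma transpose_hartley_mat: "transpose_mat (hartley_mat n) = hartley_mat n"
  by (rule eq_matI) (auto simp: hartley_mat_def mult_ac)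

lemma hartley_orthogonal:
  assumes "j < n" "l < n"
  shows "(\<Sum>k<n. cas (2 * pi * real j * real k / real n) * cas (2 * pi * real k * real l / real n))
    = (if j = l then real n else 0)"
proof -
  have n: "n > 0" using assms by simp
  have "cas (2 * pi * real j * real k / real n) * cas (2 * pi * real k * real l / real n)
    = cos (2 * pi * real k * of_int (int j - int l) / real n)
      + sin (2 * pi * real k * of_int (int j + int l) / real n)" for k
    unfolding cas_mult_cas by (simp add: algebra_simps add_divide_distrib diff_divide_distrib)
  then have "(\<Sum>k<n. cas (2 * pi * real j * real k / real n) * cas (2 * pi * real k * real l / real n))
    = (if int n dvd int j - int l then real n else 0)"
    by (simp only: sum.distrib sum_cos_multiples[OF n] sum_sin_multiples[OF n])
  moreover have "int n dvd int j - int l \<longleftrightarrow> j = l"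
    using assms dvd_imp_le_int[of "int j - int l" "int n"] by (cases "j = l") auto
  ultimately show ?thesis
    by simp
qed

lemma hartley_mat_square: "hartley_mat n * hartley_mat n = real n \<cdot>\<^sub>m 1\<^sub>m n"
  by (rule eq_matI)
    (auto simp: hartley_mat_def scalar_prod_def atLeast0LessThan hartley_orthogonal)

lemma char_poly_smult_one: "char_poly (c \<cdot>\<^sub>m 1\<^sub>m n) = [:- c, 1:] ^ n"
proof -
  have "diag_mat (c \<cdot>\<^sub>m 1\<^sub>m n) = replicate n c"
    by (rule nth_equalityI) (auto simp: diag_mat_def)
  moreover have "upper_triangular (c \<cdot>\<^sub>m 1\<^sub>m n)"
    unfolding upper_triangular_def by auto
  ultimately show ?thesis
    by (simp add: char_poly_upper_triangular[of _ n] prod_list_replicate)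
qed

lemma trace_norm_of_gram_eq_smult_one:
  assumes "n > 0" "transpose_mat A * A = c \<cdot>\<^sub>m 1\<^sub>m n"
  shows "trace_norm A = real n * sqrt c"
proof -
  have "{a. poly ([:- c, 1:] ^ n) a = 0} = {c}"
    using assms(1) by (auto simp: poly_power)
  then show ?thesis
    unfolding trace_norm_def Let_def assms(2) char_poly_smult_one by (simp add: order_power_n_n)
qed

lemma L2_set_Times: "L2_set f (A \<times> B) = L2_set (\<lambda>a. L2_set (\<lambda>b. f (a, b)) B) A"
  unfolding L2_set_def sum.cartesian_product' by (simp add: sum_nonneg)

lemma L2_set_Times_swap: "L2_set f (A \<times> B) = L2_set (\<lambda>b. L2_set (\<lambda>a. f (a, b)) A) B"
  unfolding L2_set_def sum.cartesian_product' by (simp add: sum_nonneg sum.swap[of _ B])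

lemma L2_row_le_row_norm:
  "i < dim_row R \<Longrightarrow> L2_set (\<lambda>j. cmod (R $$ (i, j))) {..<dim_col R} \<le> row_norm R"
  unfolding row_norm_def L2_set_def by (rule Max_ge) auto

lemma L2_col_le_col_norm:
  "j < dim_col C \<Longrightarrow> L2_set (\<lambda>i. cmod (C $$ (i, j))) {..<dim_row C} \<le> col_norm C"
  unfolding col_norm_def L2_set_def by (rule Max_ge) auto

lemma row_norm_nonneg: "dim_row R > 0 \<Longrightarrow> 0 \<le> row_norm R"
  using L2_row_le_row_norm[of 0 R] L2_set_nonneg order_trans by blast

lemma col_norm_nonneg: "dim_col C > 0 \<Longrightarrow> 0 \<le> col_norm C"
  using L2_col_le_col_norm[of 0 C] L2_set_nonneg order_trans by blast

lemma L2_entries_le_row_norm: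
  "L2_set (\<lambda>(i, j). cmod (R $$ (i, j))) ({..<dim_row R} \<times> {..<dim_col R})
    \<le> sqrt (dim_row R) * row_norm R"
proof (cases "dim_row R = 0")
  case False
  have "L2_set (\<lambda>(i, j). cmod (R $$ (i, j))) ({..<dim_row R} \<times> {..<dim_col R})
      \<le> L2_set (\<lambda>i. row_norm R) {..<dim_row R}"
    unfolding L2_set_Times by (rule L2_set_mono) (auto intro: L2_row_le_row_norm)
  also have "\<dots> = sqrt (dim_row R) * row_norm R"
    using False by (simp add: L2_set_constant row_norm_nonneg)
  finally show ?thesis .
qed simp

lemma L2_entries_le_col_norm:
  "L2_set (\<lambda>(i, j). cmod (C $$ (i, j))) ({..<dim_row C} \<times> {..<dim_col C})
    \<le> sqrt (dim_col C) * col_norm C"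
proof (cases "dim_col C = 0")
  case False
  have "L2_set (\<lambda>(i, j). cmod (C $$ (i, j))) ({..<dim_row C} \<times> {..<dim_col C})
      \<le> L2_set (\<lambda>j. col_norm C) {..<dim_col C}"
    unfolding L2_set_Times_swap by (rule L2_set_mono) (auto intro: L2_col_le_col_norm)
  also have "\<dots> = sqrt (dim_col C) * col_norm C"
    using False by (simp add: L2_set_constant col_norm_nonneg)
  finally show ?thesis .
qed simp

lemma mat_trace_schur_prod_mult:
  assumes "R \<in> carrier_mat n n" "C \<in> carrier_mat n n" "T \<in> carrier_mat n n"
  shows "mat_trace (schur_prod R C * T)
    = (\<Sum>(i, k)\<in>{..<n} \<times> {..<n}. R $$ (i, k) * C $$ (i, k) * T $$ (k, i))"
  using assms unfolding mat_trace_def sum.cartesian_product[symmetric]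
  by (intro sum.cong refl) (simp_all add: schur_prod_def scalar_prod_def atLeast0LessThan)

lemma norm_mat_trace_schur_prod_le:
  assumes R: "R \<in> carrier_mat n n" and C: "C \<in> carrier_mat n n" and T: "T \<in> carrier_mat n n"
    and entries: "\<And>i j. i < n \<Longrightarrow> j < n \<Longrightarrow> \<bar>T $$ (i, j)\<bar> \<le> b"
  shows "cmod (mat_trace (schur_prod R C * map_mat complex_of_real T))
    \<le> b * real n * row_norm R * col_norm C"
proof (cases "n = 0")
  case True
  then show ?thesis
    using R by (simp add: mat_trace_def schur_prod_def)
next
  case False
  let ?K = "{..<n} \<times> {..<n}"
  let ?r = "\<lambda>(i, k). cmod (R $$ (i, k))" and ?c = "\<lambda>(i, k). cmod (C $$ (i, k))"
  have b: "0 \<le> b"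
    using entries[of 0 0] False by linarith
  have "mat_trace (schur_prod R C * map_mat complex_of_real T)
      = (\<Sum>(i, k)\<in>?K. R $$ (i, k) * C $$ (i, k) * complex_of_real (T $$ (k, i)))"
    unfolding mat_trace_schur_prod_mult[OF R C map_carrier_mat[THEN iffD2, OF T]]
    using T by (intro sum.cong) auto
  moreover have "cmod (R $$ (i, k) * C $$ (i, k) * complex_of_real (T $$ (k, i)))
      \<le> b * (cmod (R $$ (i, k)) * cmod (C $$ (i, k)))" if "i < n" "k < n" for i k
    using mult_left_mono[OF entries[OF that(2,1)], of "cmod (R $$ (i, k)) * cmod (C $$ (i, k))"]
    by (simp add: norm_mult mult_ac)
  ultimately have "cmod (mat_trace (schur_prod R C * map_mat complex_of_real T))
      \<le> (\<Sum>p\<in>?K. b * (\<bar>?r p\<bar> * \<bar>?c p\<bar>))"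
    by (auto intro!: order_trans[OF norm_sum] sum_mono)
  also have "\<dots> \<le> b * (L2_set ?r ?K * L2_set ?c ?K)"
    unfolding sum_distrib_left[symmetric] using b by (intro mult_left_mono L2_set_mult_ineq)
  also have "\<dots> \<le> b * (sqrt n * row_norm R * (sqrt n * col_norm C))"
    using L2_entries_le_row_norm[of R] L2_entries_le_col_norm[of C] R C b
    by (intro mult_left_mono mult_mono) (auto intro: order_trans[OF L2_set_nonneg])
  also have "\<dots> = b * real n * row_norm R * col_norm C"
    by (simp add: algebra_simps)
  finally show ?thesis .
qed

lemma transpose_smult_mat: "transpose_mat (c \<cdot>\<^sub>m A) = c \<cdot>\<^sub>m transpose_mat A"
  by (rule eq_matI) auto

definition normalized_hartley_mat :: "nat \<Rightarrow> real mat" where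
  "normalized_hartley_mat n = (1 / (real n * sqrt (real n))) \<cdot>\<^sub>m hartley_mat n"

lemma normalized_hartley_mat_carrier: "normalized_hartley_mat n \<in> carrier_mat n n"
  unfolding normalized_hartley_mat_def using hartley_mat_carrier by simp

lemma transpose_normalized_hartley_mat:
  "transpose_mat (normalized_hartley_mat n) = normalized_hartley_mat n"
  unfolding normalized_hartley_mat_def transpose_smult_mat transpose_hartley_mat ..

lemma normalized_hartley_mat_square:
  assumes "n > 0"
  shows "normalized_hartley_mat n * normalized_hartley_mat n = (1 / (real n)\<^sup>2) \<cdot>\<^sub>m 1\<^sub>m n"
proof -
  define c where "c = 1 / (real n * sqrt (real n))"
  have "normalized_hartley_mat n * normalized_hartley_mat n
      = c \<cdot>\<^sub>m (c \<cdot>\<^sub>m (hartley_mat n * hartley_mat n))"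
    unfolding normalized_hartley_mat_def c_def[symmetric] using hartley_mat_carrier[of n]
    by (simp add: mult_smult_assoc_mat[of _ n n _ n] mult_smult_distrib[of _ n n _ n])
  also have "\<dots> = (1 / (real n)\<^sup>2) \<cdot>\<^sub>m 1\<^sub>m n"
    unfolding hartley_mat_square using assms
    by (intro eq_matI) (auto simp: c_def power2_eq_square)
  finally show ?thesis .
qed

lemma trace_norm_normalized_hartley_mat:
  "n > 0 \<Longrightarrow> trace_norm (normalized_hartley_mat n) = 1"
  by (simp add: trace_norm_of_gram_eq_smult_one transpose_normalized_hartley_mat
      normalized_hartley_mat_square real_sqrt_divide)

lemma abs_normalized_hartley_mat_le:
  assumes "i < n" "j < n"
  shows "\<bar>normalized_hartley_mat n $$ (i, j)\<bar> \<le> 2 / (real n * sqrt (real n))"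
  using assms abs_cas_le
  by (simp add: normalized_hartley_mat_def hartley_mat_def abs_mult divide_right_mono)

lemma norm_mat_trace_schur_prod_normalized_hartley_le:
  assumes "n > 0" "R \<in> carrier_mat n n" "C \<in> carrier_mat n n"
  shows "cmod (mat_trace (schur_prod R C * map_mat complex_of_real (normalized_hartley_mat n)))
    \<le> 2 * row_norm R * col_norm C / sqrt (real n)"
proof -
  have "cmod (mat_trace (schur_prod R C * map_mat complex_of_real (normalized_hartley_mat n)))
      \<le> 2 / (real n * sqrt (real n)) * real n * row_norm R * col_norm C"
    using assms(2,3) normalized_hartley_mat_carrier abs_normalized_hartley_mat_le
    by (rule norm_mat_trace_schur_prod_le)
  also have "\<dots> = 2 * row_norm R * col_norm C / sqrt (real n)"
    using assms(1) by simp
  finally show ?thesis .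
qed

theorem mainTheorem5:
  shows "\<exists>n0::nat. \<forall>n\<ge>n0. \<exists>T :: real mat.
           T \<in> carrier_mat n n \<and> transpose_mat T = T \<and> trace_norm T = 1 \<and>
           (\<forall>R C :: complex mat. R \<in> carrier_mat n n \<longrightarrow> C \<in> carrier_mat n n \<longrightarrow>
              cmod (mat_trace (schur_prod R C * map_mat complex_of_real T))
                \<le> 3 * row_norm R * col_norm C * real n powr (-1/2))"
proof (rule exI[of _ 1], intro allI impI exI conjI)
  fix n :: nat
  assume "1 \<le> n"
  then have n: "n > 0" by simp
  show "normalized_hartley_mat n \<in> carrier_mat n n"
    by (rule normalized_hartley_mat_carrier)
  show "transpose_mat (normalized_hartley_mat n) = normalized_hartley_mat n"
    by (rule transpose_normalized_hartley_mat)
  show "trace_norm (normalized_hartley_mat n) = 1"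
    using n by (rule trace_norm_normalized_hartley_mat)
  fix R C :: "complex mat"
  assume R: "R \<in> carrier_mat n n" and C: "C \<in> carrier_mat n n"
  have "0 \<le> row_norm R * col_norm C"
    using R C n by (simp add: row_norm_nonneg col_norm_nonneg)
  then have "2 * row_norm R * col_norm C / sqrt n \<le> 3 * row_norm R * col_norm C / sqrt n"
    by (intro divide_right_mono) (simp_all add: mult.assoc mult.commute)
  then show "cmod (mat_trace (schur_prod R C * map_mat complex_of_real (normalized_hartley_mat n)))
      \<le> 3 * row_norm R * col_norm C * real n powr (-1/2)"
    using norm_mat_trace_schur_prod_normalized_hartley_le[OF n R C]
    by (simp add: powr_minus_divide powr_half_sqrt)
qed

end
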